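(* Let $Y_1,\dots,Y_k$ be real numbers and let $M=\max\{0,\max_{1\le j\le k}(Y_1+\cdots+Y_j)\}$ be the maximum of the walk with steps $Y_1,\dots,Y_k$. Let $i\in\{1,\dots,k\}$ and $c\ge1$, and let $M'$ be the maximum of the walk with steps $Y_1,\dots,Y_i,cY_{i+1},\dots,cY_k$, defined in the same way. Then $M\le M'$. *)

theory Defs
  imports Main Complex_Main
begin

definition walk_max :: "(nat \<Rightarrow> real) \<Rightarrow> nat \<Rightarrow> real" where
  "walk_max Y k = Max (insert 0 {(\<Sum>l=1..j. Y l) | j. 1 \<le> j \<and> j \<le> k})"

end

theory Submission
  imports Defs
begin

text \<open>Partial sums up to step i are unchanged by the rescaling, while a later partial sum
  S_i + T becomes S_i + c T. Since c \<ge> 1, S_i + T is at most S_i (if T < 0) or at most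
  S_i + c T (if T \<ge> 0), so every candidate of the first maximum is dominated by a
  candidate of the second.\<close>

lemma finite_partial_sums: "finite {(\<Sum>l=1..j. Y l) | j. 1 \<le> j \<and> j \<le> (k::nat)}"
proof -
  have "{(\<Sum>l=1..j. Y l) | j. 1 \<le> j \<and> j \<le> k} = (\<lambda>j. \<Sum>l=1..j. Y l) ` {1..k}"
    by auto
  then show ?thesis by simp
qed

lemma walk_max_nonneg: "0 \<le> walk_max Y k"
  unfolding walk_max_def by (rule Max_ge) (use finite_partial_sums in auto)

lemma partial_sum_le_walk_max: "1 \<le> j \<Longrightarrow> j \<le> k \<Longrightarrow> (\<Sum>l=1..j. Y l) \<le> walk_max Y k"
  unfolding walk_max_def by (rule Max_ge) (use finite_partial_sums in auto)

lemma walk_max_le: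
  assumes "0 \<le> B" and "\<And>j. 1 \<le> j \<Longrightarrow> j \<le> k \<Longrightarrow> (\<Sum>l=1..j. Y l) \<le> B"
  shows "walk_max Y k \<le> B"
  unfolding walk_max_def using assms finite_partial_sums[of Y k] by (auto simp: Max_le_iff)

lemma sum_atLeastAtMost_1_split:
  fixes f :: "nat \<Rightarrow> 'a::comm_monoid_add"
  assumes "i \<le> j"
  shows "(\<Sum>l=1..j. f l) = (\<Sum>l=1..i. f l) + (\<Sum>l=Suc i..j. f l)"
proof -
  obtain p where "j = i + p" using assms le_Suc_ex by blast
  then show ?thesis using sum.ub_add_nat[of 1 i f p] by simp
qed

lemma partial_sum_rescaled_head:
  fixes Y :: "nat \<Rightarrow> 'a::semiring_1"
  assumes "j \<le> i"
  shows "(\<Sum>l=1..j. if l \<le> i then Y l else c * Y l) = (\<Sum>l=1..j. Y l)"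
  using assms by (intro sum.cong) auto

lemma partial_sum_rescaled_tail:
  fixes Y :: "nat \<Rightarrow> 'a::comm_semiring_1"
  assumes "i \<le> j"
  shows "(\<Sum>l=1..j. if l \<le> i then Y l else c * Y l)
    = (\<Sum>l=1..i. Y l) + c * (\<Sum>l=Suc i..j. Y l)"
proof -
  have "(\<Sum>l=Suc i..j. if l \<le> i then Y l else c * Y l) = (\<Sum>l=Suc i..j. c * Y l)"
    by (intro sum.cong) auto
  then show ?thesis
    using sum_atLeastAtMost_1_split[OF assms, of "\<lambda>l. if l \<le> i then Y l else c * Y l"]
      partial_sum_rescaled_head[of i i Y c]
    by (simp add: sum_distrib_left)
qed

lemma add_le_max_add_scaled:
  fixes a b c :: real
  assumes "1 \<le> c"
  shows "a + b \<le> max a (a + c * b)"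
proof (cases "0 \<le> b")
  case True
  then have "b \<le> c * b" using mult_right_mono[OF assms True] by simp
  then show ?thesis by simp
qed simp

theorem lemmaC1:
  fixes Y :: "nat \<Rightarrow> real" and k i :: nat and c :: real
  assumes "1 \<le> i" and "i \<le> k" and "c \<ge> 1"
  shows "walk_max Y k \<le> walk_max (\<lambda>l. if l \<le> i then Y l else c * Y l) k"
proof (rule walk_max_le[OF walk_max_nonneg])
  let ?Z = "\<lambda>l. if l \<le> i then Y l else c * Y l"
  fix j assume j: "1 \<le> j" "j \<le> k"
  show "(\<Sum>l=1..j. Y l) \<le> walk_max ?Z k"
  proof (cases "j \<le> i")
    case True
    then show ?thesis
      using partial_sum_rescaled_head partial_sum_le_walk_max[OF j, of ?Z] by metis
  next
    case False
    then have "i \<le> j" by simp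
    have "(\<Sum>l=1..j. Y l) \<le> max (\<Sum>l=1..i. Y l) ((\<Sum>l=1..i. Y l) + c * (\<Sum>l=Suc i..j. Y l))"
      unfolding sum_atLeastAtMost_1_split[OF \<open>i \<le> j\<close>, of Y]
      by (rule add_le_max_add_scaled[OF assms(3)])
    also have "\<dots> = max (\<Sum>l=1..i. ?Z l) (\<Sum>l=1..j. ?Z l)"
      using partial_sum_rescaled_head[of i i Y c] partial_sum_rescaled_tail[OF \<open>i \<le> j\<close>, of Y c]
      by simp
    also have "\<dots> \<le> walk_max ?Z k"
      using partial_sum_le_walk_max[OF assms(1,2), of ?Z] partial_sum_le_walk_max[OF j, of ?Z]
      by (simp only: max.bounded_iff)
    finally show ?thesis .
  qed
qed

end
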